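(* Let $K$ be a convex body in $\mathbb{R}^d$ and let $x,x'$ be regular boundary points of $K$ with exterior normal unit vectors $\xi,\xi'$ respectively. If $\xi\neq\xi'$, then the sets $-S(K,-\xi)+x$ and $-S(K,-\xi')+x'$ are disjoint.
   Context: A convex body is a compact convex set with nonempty interior. A boundary point is regular if $K$ has a unique support hyperplane there; its exterior normal unit vector $\xi$ satisfies $K\subset\{z:\langle z,\xi\rangle\le\langle x,\xi\rangle\}$. For a unit vector $\eta$, $S(K,\eta)$ is the set of points of $K$ maximizing $\langle\cdot,\eta\rangle$. *)

theory Defs
  imports "HOL-Analysis.Analysis"
begin

definition convex_body :: "'a::euclidean_space set \<Rightarrow> bool" where
  "convex_body K \<longleftrightarrow> compact K \<and> convex K \<and> interior K \<noteq> {}"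

definition support_hyperplane_at :: "'a::euclidean_space set \<Rightarrow> 'a \<Rightarrow> 'a set \<Rightarrow> bool" where
  "support_hyperplane_at K x H \<longleftrightarrow> x \<in> K \<and>
     (\<exists>u. u \<noteq> 0 \<and> H = {z. z \<bullet> u = x \<bullet> u} \<and> K \<subseteq> {z. z \<bullet> u \<le> x \<bullet> u})"

definition regular_boundary_point :: "'a::euclidean_space set \<Rightarrow> 'a \<Rightarrow> bool" where
  "regular_boundary_point K x \<longleftrightarrow> x \<in> frontier K \<and> x \<in> K \<and> (\<exists>!H. support_hyperplane_at K x H)"

definition exterior_normal :: "'a::euclidean_space set \<Rightarrow> 'a \<Rightarrow> 'a \<Rightarrow> bool" where
  "exterior_normal K x \<xi> \<longleftrightarrow> norm \<xi> = 1 \<and> K \<subseteq> {z. z \<bullet> \<xi> \<le> x \<bullet> \<xi>}"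

definition support_set :: "'a::euclidean_space set \<Rightarrow> 'a \<Rightarrow> 'a set" where
  "support_set K \<eta> = {y \<in> K. \<forall>z\<in>K. z \<bullet> \<eta> \<le> y \<bullet> \<eta>}"

end

theory Submission
  imports Defs
begin

text \<open>If \<open>x - y = x' - y'\<close> with \<open>y \<in> S(K,-\<xi>)\<close> and \<open>y' \<in> K\<close>, then
  \<open>x' \<bullet> \<xi> = x \<bullet> \<xi> + (y' - y) \<bullet> \<xi> \<ge> x \<bullet> \<xi>\<close>, so \<open>\<xi>\<close> is also an exterior normal at \<open>x'\<close>.
  Regularity of \<open>x'\<close> forces \<open>\<xi> = \<plusminus>\<xi>'\<close>, hence \<open>\<xi> = -\<xi>'\<close>; but then \<open>K\<close> lies in the
  hyperplane \<open>{z. z \<bullet> \<xi> = x' \<bullet> \<xi>}\<close>, contradicting that \<open>K\<close> has interior points.\<close>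

lemma unit_normals_of_equal_hyperplanes:
  fixes u v p :: "'a::euclidean_space"
  assumes "norm u = 1" "norm v = 1"
    and hyperplanes_eq: "{z. z \<bullet> u = p \<bullet> u} = {z. z \<bullet> v = p \<bullet> v}"
  shows "u = v \<or> u = - v"
proof -
  define c where "c = u \<bullet> v"
  define w where "w = u - c *\<^sub>R v"
  have uu: "u \<bullet> u = 1" and vv: "v \<bullet> v = 1"
    using assms(1,2) by (simp_all add: norm_eq_sqrt_inner)
  have wv: "w \<bullet> v = 0"
    unfolding w_def c_def using vv by (simp add: inner_simps)
  then have "p + w \<in> {z. z \<bullet> u = p \<bullet> u}"
    using hyperplanes_eq by (simp add: inner_simps)
  then have wu: "w \<bullet> u = 0"
    by (simp add: inner_simps)
  have "w \<bullet> w = w \<bullet> u - c * (w \<bullet> v)"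
    unfolding w_def by (simp add: inner_simps)
  then have "w = 0"
    using wu wv by simp
  then have u_eq: "u = c *\<^sub>R v"
    unfolding w_def by simp
  have "c * c = 1"
    using uu vv unfolding u_eq by (simp add: inner_simps)
  then have "c = 1 \<or> c = -1"
    by (metis mult_cancel_left1 square_eq_iff)
  then show ?thesis
    using u_eq by auto
qed

lemma support_hyperplane_at_exterior_normal:
  assumes "x \<in> K" "exterior_normal K x \<xi>"
  shows "support_hyperplane_at K x {z. z \<bullet> \<xi> = x \<bullet> \<xi>}"
proof -
  have "\<xi> \<noteq> 0"
    using assms(2) by (auto simp: exterior_normal_def)
  then show ?thesis
    using assms unfolding support_hyperplane_at_def exterior_normal_def by blast
qed

lemma regular_boundary_point_exterior_normals:
  assumes "regular_boundary_point K x" "exterior_normal K x \<xi>" "exterior_normal K x \<eta>"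
  shows "\<xi> = \<eta> \<or> \<xi> = - \<eta>"
proof -
  have "x \<in> K" and unique: "\<exists>!H. support_hyperplane_at K x H"
    using assms(1) by (auto simp: regular_boundary_point_def)
  then have "{z. z \<bullet> \<xi> = x \<bullet> \<xi>} = {z. z \<bullet> \<eta> = x \<bullet> \<eta>}"
    using support_hyperplane_at_exterior_normal assms(2,3) by blast
  moreover have "norm \<xi> = 1" "norm \<eta> = 1"
    using assms(2,3) by (simp_all add: exterior_normal_def)
  ultimately show ?thesis
    using unit_normals_of_equal_hyperplanes by blast
qed

lemma convex_body_no_opposite_exterior_normals:
  assumes "convex_body K" "exterior_normal K x \<xi>"
  shows "\<not> exterior_normal K x (- \<xi>)"
proof
  assume "exterior_normal K x (- \<xi>)"
  then have "K \<subseteq> {z. \<xi> \<bullet> z = x \<bullet> \<xi>}"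
    using assms(2) by (fastforce simp: exterior_normal_def inner_commute)
  moreover have "\<xi> \<noteq> 0"
    using assms(2) by (auto simp: exterior_normal_def)
  ultimately have "interior K = {}"
    using interior_mono[of K "{z. \<xi> \<bullet> z = x \<bullet> \<xi>}"] by simp
  then show False
    using assms(1) by (simp add: convex_body_def)
qed

lemma exterior_normal_translate_by_support_set:
  assumes "exterior_normal K x \<xi>" "y \<in> support_set K (- \<xi>)" "y' \<in> K"
  shows "exterior_normal K (x - y + y') \<xi>"
proof -
  have "y \<bullet> \<xi> \<le> y' \<bullet> \<xi>"
    using assms(2,3) by (auto simp: support_set_def)
  then have "x \<bullet> \<xi> \<le> (x - y + y') \<bullet> \<xi>"
    by (simp add: inner_simps)
  then show ?thesis
    using assms(1) unfolding exterior_normal_def by fastforce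
qed

theorem lemma4p5:
  fixes K :: "'a::euclidean_space set" and x x' \<xi> \<xi>' :: 'a
  assumes "convex_body K"
    and "regular_boundary_point K x" and "regular_boundary_point K x'"
    and "exterior_normal K x \<xi>" and "exterior_normal K x' \<xi>'"
    and "\<xi> \<noteq> \<xi>'"
  shows "((\<lambda>y. - y + x) ` support_set K (- \<xi>)) \<inter> ((\<lambda>y. - y + x') ` support_set K (- \<xi>')) = {}"
proof (rule ccontr)
  assume "((\<lambda>y. - y + x) ` support_set K (- \<xi>)) \<inter> ((\<lambda>y. - y + x') ` support_set K (- \<xi>')) \<noteq> {}"
  then obtain y y' where y: "y \<in> support_set K (- \<xi>)" and y': "y' \<in> support_set K (- \<xi>')"
    and "- y + x = - y' + x'"
    by blast
  then have "x' = x - y + y'"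
    by (simp add: algebra_simps)
  moreover have "y' \<in> K"
    using y' by (simp add: support_set_def)
  ultimately have "exterior_normal K x' \<xi>"
    using exterior_normal_translate_by_support_set assms(4) y by blast
  then have "\<xi> = - \<xi>'"
    using regular_boundary_point_exterior_normals assms(3,5,6) by blast
  then show False
    using convex_body_no_opposite_exterior_normals assms(1,5) \<open>exterior_normal K x' \<xi>\<close> by blast
qed

end
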